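(* Let $P$ be a subpath of $\mathrm{OPT}$ whose two end-points $p,q$ both lie to the right of a vertical line $\Gamma$, and suppose $P$ crosses $\Gamma$. Then the left-most point of $P$ (which lies to the left of $\Gamma$) is a right reflection point. (Symmetrically, with left and right exchanged.)
   Context: Instance: vertical line segments $s_1,\dots,s_n$ in $\mathbb{R}^2$, each of length $1$, with pairwise distinct $x$-coordinates; $x(\cdot),y(\cdot)$ denote coordinates. A tour is a cyclic sequence of points $p_1,\dots,p_\sigma$, each on some segment, with every segment containing at least one $p_j$; the straight segments joining consecutive points are legs; cost is total length. $\mathrm{OPT}$ is a fixed minimum-cost tour, oriented $p_1\to p_2\to\cdots\to p_\sigma\to p_1$, with the standing assumptions that no two consecutive points lie on the same segment (no leg is vertical), that no horizontal line crosses all segments, and that $\mathrm{OPT}$ is not self-crossing. For a point $p_j$ of $\mathrm{OPT}$ on segment $s$, a leg incident to $p_j$ is to the left of $s$ if it lies in the half-plane $x\le x(s)$ and to the right of $s$ if it lies in $x\ge x(s)$. $p_j$ is a left (resp. right) reflection point if both of its incident legs are to the left (resp. right) of $s$. *)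

theory Defs
  imports "HOL-Analysis.Analysis"
begin

definition seg :: "(nat \<Rightarrow> real) \<Rightarrow> (nat \<Rightarrow> real) \<Rightarrow> nat \<Rightarrow> (real \<times> real) set" where
  "seg a b i = closed_segment (a i, b i) (a i, b i + 1)"

(* A tour: cyclic sequence p 0, ..., p (\<sigma>-1); indices are taken mod \<sigma>. *)
definition is_tour :: "(nat \<Rightarrow> real) \<Rightarrow> (nat \<Rightarrow> real) \<Rightarrow> nat \<Rightarrow> nat \<Rightarrow> (nat \<Rightarrow> real \<times> real) \<Rightarrow> bool" where
  "is_tour a b n \<sigma> p \<longleftrightarrow> 0 < \<sigma> \<and> (\<forall>k<\<sigma>. \<exists>i<n. p k \<in> seg a b i) \<and> (\<forall>i<n. \<exists>k<\<sigma>. p k \<in> seg a b i)"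

definition nxt :: "nat \<Rightarrow> nat \<Rightarrow> nat" where
  "nxt \<sigma> k = (k + 1) mod \<sigma>"

definition prv :: "nat \<Rightarrow> nat \<Rightarrow> nat" where
  "prv \<sigma> k = (k + \<sigma> - 1) mod \<sigma>"

definition leg :: "nat \<Rightarrow> (nat \<Rightarrow> real \<times> real) \<Rightarrow> nat \<Rightarrow> (real \<times> real) set" where
  "leg \<sigma> p k = closed_segment (p k) (p (nxt \<sigma> k))"

definition tour_cost :: "nat \<Rightarrow> (nat \<Rightarrow> real \<times> real) \<Rightarrow> real" where
  "tour_cost \<sigma> p = (\<Sum>k<\<sigma>. dist (p k) (p (nxt \<sigma> k)))"

definition is_opt :: "(nat \<Rightarrow> real) \<Rightarrow> (nat \<Rightarrow> real) \<Rightarrow> nat \<Rightarrow> nat \<Rightarrow> (nat \<Rightarrow> real \<times> real) \<Rightarrow> bool" where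
  "is_opt a b n \<sigma> p \<longleftrightarrow> is_tour a b n \<sigma> p \<and>
     (\<forall>\<sigma>' q. is_tour a b n \<sigma>' q \<longrightarrow> tour_cost \<sigma> p \<le> tour_cost \<sigma>' q)"

definition no_vertical_leg :: "(nat \<Rightarrow> real) \<Rightarrow> (nat \<Rightarrow> real) \<Rightarrow> nat \<Rightarrow> nat \<Rightarrow> (nat \<Rightarrow> real \<times> real) \<Rightarrow> bool" where
  "no_vertical_leg a b n \<sigma> p \<longleftrightarrow>
     (\<forall>k<\<sigma>. \<forall>i<n. \<not> (p k \<in> seg a b i \<and> p (nxt \<sigma> k) \<in> seg a b i))"

definition no_horizontal_stabber :: "(nat \<Rightarrow> real) \<Rightarrow> nat \<Rightarrow> bool" where
  "no_horizontal_stabber b n \<longleftrightarrow> \<not> (\<exists>y. \<forall>i<n. b i \<le> y \<and> y \<le> b i + 1)"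

definition not_self_crossing :: "nat \<Rightarrow> (nat \<Rightarrow> real \<times> real) \<Rightarrow> bool" where
  "not_self_crossing \<sigma> p \<longleftrightarrow>
     (\<forall>k<\<sigma>. \<forall>l<\<sigma>. k \<noteq> l \<longrightarrow>
        open_segment (p k) (p (nxt \<sigma> k)) \<inter> open_segment (p l) (p (nxt \<sigma> l)) = {})"

definition right_reflection :: "nat \<Rightarrow> (nat \<Rightarrow> real \<times> real) \<Rightarrow> nat \<Rightarrow> bool" where
  "right_reflection \<sigma> p j \<longleftrightarrow>
     leg \<sigma> p (prv \<sigma> j) \<subseteq> {z. fst z \<ge> fst (p j)} \<and> leg \<sigma> p j \<subseteq> {z. fst z \<ge> fst (p j)}"

definition left_reflection :: "nat \<Rightarrow> (nat \<Rightarrow> real \<times> real) \<Rightarrow> nat \<Rightarrow> bool" where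
  "left_reflection \<sigma> p j \<longleftrightarrow>
     leg \<sigma> p (prv \<sigma> j) \<subseteq> {z. fst z \<le> fst (p j)} \<and> leg \<sigma> p j \<subseteq> {z. fst z \<le> fst (p j)}"

(* subpath of OPT starting at index i with m legs: vertices p ((i+t) mod \<sigma>), t = 0..m *)
definition subpath_pts :: "nat \<Rightarrow> (nat \<Rightarrow> real \<times> real) \<Rightarrow> nat \<Rightarrow> nat \<Rightarrow> (real \<times> real) set" where
  "subpath_pts \<sigma> p i m = (\<Union>t<m. leg \<sigma> p ((i + t) mod \<sigma>))"

end

theory Submission
  imports Defs
begin

(* The extreme vertex of the subpath lies beyond \<Gamma> while both end-points do not, so it is
   an interior vertex of the subpath; its two incident legs therefore belong to the subpath,
   which lies entirely on one side of that vertex. *)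

lemma prv_add_mod:
  assumes "0 < \<sigma>" "0 < t"
  shows "prv \<sigma> ((i + t) mod \<sigma>) = (i + (t - 1)) mod \<sigma>"
proof -
  have "prv \<sigma> ((i + t) mod \<sigma>) = ((i + t) mod \<sigma> + (\<sigma> - 1)) mod \<sigma>"
    using assms(1) by (simp add: prv_def)
  also have "\<dots> = (i + t + (\<sigma> - 1)) mod \<sigma>"
    by (simp add: mod_add_left_eq)
  also have "i + t + (\<sigma> - 1) = i + (t - 1) + \<sigma>"
    using assms by simp
  finally show ?thesis by simp
qed

lemma incident_legs_subset_subpath_pts:
  assumes "0 < \<sigma>" "0 < t" "t < m"
  shows "leg \<sigma> p (prv \<sigma> ((i + t) mod \<sigma>)) \<union> leg \<sigma> p ((i + t) mod \<sigma>) \<subseteq> subpath_pts \<sigma> p i m"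
proof -
  have "t - 1 < m" using assms by simp
  then show ?thesis
    using assms prv_add_mod[of \<sigma> t i] unfolding subpath_pts_def by auto
qed

text \<open>Stated for an arbitrary functional \<open>f\<close> so that it covers the leftmost
  (\<open>f = fst\<close>) and the rightmost (\<open>f = - fst\<close>) vertex alike.\<close>

lemma subpath_minimal_vertex:
  fixes f :: "real \<times> real \<Rightarrow> real" and i t m \<sigma> :: nat
  defines "j \<equiv> (i + t) mod \<sigma>"
  assumes "i < \<sigma>" "t \<le> m"
    and ends: "c < f (p i)" "c < f (p ((i + m) mod \<sigma>))"
    and beyond: "z \<in> subpath_pts \<sigma> p i m" "f z < c"
    and minimal: "\<forall>z \<in> subpath_pts \<sigma> p i m. f (p j) \<le> f z"
  shows "f (p j) < c \<and> leg \<sigma> p (prv \<sigma> j) \<union> leg \<sigma> p j \<subseteq> {z. f (p j) \<le> f z}"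
proof -
  have below: "f (p j) < c"
    using minimal beyond by fastforce
  have "t \<noteq> 0"
  proof
    assume "t = 0"
    then have "j = i" using \<open>i < \<sigma>\<close> by (simp add: j_def)
    with below ends(1) show False by simp
  qed
  moreover have "t \<noteq> m"
    using below ends(2) by (auto simp: j_def)
  ultimately have "leg \<sigma> p (prv \<sigma> j) \<union> leg \<sigma> p j \<subseteq> subpath_pts \<sigma> p i m"
    using incident_legs_subset_subpath_pts[of \<sigma> t m p i] \<open>i < \<sigma>\<close> \<open>t \<le> m\<close> by (simp add: j_def)
  with minimal below show ?thesis by blast
qed

theorem lemma1:
  fixes n \<sigma> :: nat and a b :: "nat \<Rightarrow> real" and p :: "nat \<Rightarrow> real \<times> real"
  assumes distinct_x: "inj_on a {..<n}"
    and opt: "is_opt a b n \<sigma> p"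
    and novert: "no_vertical_leg a b n \<sigma> p"
    and nostab: "no_horizontal_stabber b n"
    and nocross: "not_self_crossing \<sigma> p"
  shows
   "(\<forall>i m c. i < \<sigma> \<and> m \<le> \<sigma> \<and>
        fst (p i) > c \<and> fst (p ((i + m) mod \<sigma>)) > c \<and>
        (\<exists>z \<in> subpath_pts \<sigma> p i m. fst z < c) \<longrightarrow>
        (\<forall>t\<le>m. (\<forall>z \<in> subpath_pts \<sigma> p i m. fst (p ((i + t) mod \<sigma>)) \<le> fst z) \<longrightarrow>
            fst (p ((i + t) mod \<sigma>)) < c \<and> right_reflection \<sigma> p ((i + t) mod \<sigma>)))
  \<and> (\<forall>i m c. i < \<sigma> \<and> m \<le> \<sigma> \<and>
        fst (p i) < c \<and> fst (p ((i + m) mod \<sigma>)) < c \<and>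
        (\<exists>z \<in> subpath_pts \<sigma> p i m. fst z > c) \<longrightarrow>
        (\<forall>t\<le>m. (\<forall>z \<in> subpath_pts \<sigma> p i m. fst (p ((i + t) mod \<sigma>)) \<ge> fst z) \<longrightarrow>
            fst (p ((i + t) mod \<sigma>)) > c \<and> left_reflection \<sigma> p ((i + t) mod \<sigma>)))"
proof (rule conjI; intro allI impI)
  fix i m t :: nat and c :: real
  assume H: "i < \<sigma> \<and> m \<le> \<sigma> \<and> fst (p i) > c \<and> fst (p ((i + m) mod \<sigma>)) > c \<and>
      (\<exists>z \<in> subpath_pts \<sigma> p i m. fst z < c)" and "t \<le> m"
    and leftmost: "\<forall>z \<in> subpath_pts \<sigma> p i m. fst (p ((i + t) mod \<sigma>)) \<le> fst z"
  from H obtain z where "z \<in> subpath_pts \<sigma> p i m" "fst z < c" by blast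
  then have "fst (p ((i + t) mod \<sigma>)) < c \<and>
      leg \<sigma> p (prv \<sigma> ((i + t) mod \<sigma>)) \<union> leg \<sigma> p ((i + t) mod \<sigma>)
        \<subseteq> {z. fst (p ((i + t) mod \<sigma>)) \<le> fst z}"
    using H \<open>t \<le> m\<close> leftmost by (intro subpath_minimal_vertex) auto
  then show "fst (p ((i + t) mod \<sigma>)) < c \<and> right_reflection \<sigma> p ((i + t) mod \<sigma>)"
    by (auto simp: right_reflection_def)
next
  fix i m t :: nat and c :: real
  assume H: "i < \<sigma> \<and> m \<le> \<sigma> \<and> fst (p i) < c \<and> fst (p ((i + m) mod \<sigma>)) < c \<and>
      (\<exists>z \<in> subpath_pts \<sigma> p i m. fst z > c)" and "t \<le> m"
    and rightmost: "\<forall>z \<in> subpath_pts \<sigma> p i m. fst (p ((i + t) mod \<sigma>)) \<ge> fst z"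
  from H obtain z where "z \<in> subpath_pts \<sigma> p i m" "fst z > c" by blast
  then have "- fst (p ((i + t) mod \<sigma>)) < - c \<and>
      leg \<sigma> p (prv \<sigma> ((i + t) mod \<sigma>)) \<union> leg \<sigma> p ((i + t) mod \<sigma>)
        \<subseteq> {z. - fst (p ((i + t) mod \<sigma>)) \<le> - fst z}"
    using H \<open>t \<le> m\<close> rightmost by (intro subpath_minimal_vertex[where f = "\<lambda>z. - fst z"]) auto
  then show "fst (p ((i + t) mod \<sigma>)) > c \<and> left_reflection \<sigma> p ((i + t) mod \<sigma>)"
    by (auto simp: left_reflection_def)
qed

end
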